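(* Let $(V,\omega)=(\mathbb{R}^{2d},\sum_i dx_i\wedge dy_i)$ and $n\ge1$. Identify $(V\times V)^{\times n}$ with $T^*(V^{\times n})$ via, in each factor, $((x,y),(x',y'))\mapsto(q,q',p,p')$ with $q=\tfrac{x+x'}2$, $q'=\tfrac{y+y'}2$, $p=y'-y$, $p'=x-x'$, where $Q=(q,q')\in V$ is the base point and $(p,p')$ the covector. Let $\mathscr{L}=\{(z_1,z_1',\dots,z_n,z_n')\in(V\times V)^{\times n}: z_i'=z_{i+1},\ i=1,\dots,n\}$ with indices mod $n$ ($z_{n+1}=z_1$). Then $\mathscr{L}$ is a Lagrangian subspace of $T^*(V^{\times n})$. If $n$ is odd, $\mathscr{L}$ is the graph of $dF$ for the quadratic function $F(Q_1,\dots,Q_n)=2\sum_{1\le i<j\le n}(-1)^{i+j-1}\omega(Q_i,Q_j)$. If $n$ is even, $\mathscr{L}$ is not given by a generating function (it is not the graph of the differential of a function on $V^{\times n}$).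
   Context: The symplectic form on $(V\times V)^{\times n}$ is $(\omega\ominus\omega)^{\oplus n}$, where $\omega\ominus\omega=dx'\wedge dy'-dx\wedge dy$ on $V\times V$; the identification above is a linear symplectomorphism onto $T^*(V^{\times n})$ with its canonical form $\sum (dq\wedge dp+dq'\wedge dp')$. Here $\omega((x,y),(x',y'))=x\cdot y'-y\cdot x'$. *)

theory Defs
  imports "HOL-Analysis.Analysis"
begin

text \<open>V = R^{2d}: a point of V is a pair (x,y) with x, y in R^d (d = CARD('d)).\<close>
type_synonym 'd V = "(real^'d) \<times> (real^'d)"

definition omega :: "'d::finite V \<Rightarrow> 'd V \<Rightarrow> real" where
  "omega z w = fst z \<bullet> snd w - snd z \<bullet> fst w"

text \<open>Tuples indexed by 0..n-1 are functions on nat that vanish from index n on.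
  A point of T^*(V^n) is a pair (Q,P): Q i = (q_i,q'_i) the base point,
  P i = (p_i,p'_i) the covector (p paired with q, p' paired with q').\<close>
definition Tstar :: "nat \<Rightarrow> ((nat \<Rightarrow> 'd::finite V) \<times> (nat \<Rightarrow> 'd V)) set" where
  "Tstar n = {(Q,P). \<forall>i\<ge>n. Q i = 0 \<and> P i = 0}"

definition can_form :: "nat \<Rightarrow> (nat \<Rightarrow> 'd::finite V) \<times> (nat \<Rightarrow> 'd V)
    \<Rightarrow> (nat \<Rightarrow> 'd V) \<times> (nat \<Rightarrow> 'd V) \<Rightarrow> real" where
  "can_form n u v = (\<Sum>i<n.
      (fst (fst u i) \<bullet> fst (snd v i) - fst (fst v i) \<bullet> fst (snd u i))
    + (snd (fst u i) \<bullet> snd (snd v i) - snd (fst v i) \<bullet> snd (snd u i)))"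

definition lagrangian :: "nat \<Rightarrow> ((nat \<Rightarrow> 'd::finite V) \<times> (nat \<Rightarrow> 'd V)) set \<Rightarrow> bool" where
  "lagrangian n L \<longleftrightarrow>
     L \<subseteq> Tstar n \<and>
     (\<lambda>i. 0, \<lambda>i. 0) \<in> L \<and>
     (\<forall>u\<in>L. \<forall>v\<in>L. (\<lambda>i. fst u i + fst v i, \<lambda>i. snd u i + snd v i) \<in> L) \<and>
     (\<forall>c::real. \<forall>u\<in>L. (\<lambda>i. c *\<^sub>R fst u i, \<lambda>i. c *\<^sub>R snd u i) \<in> L) \<and>
     (\<forall>u\<in>Tstar n. (\<forall>v\<in>L. can_form n u v = 0) \<longleftrightarrow> u \<in> L)"

definition Phi :: "(nat \<Rightarrow> 'd::finite V \<times> 'd V) \<Rightarrow> (nat \<Rightarrow> 'd V) \<times> (nat \<Rightarrow> 'd V)" where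
  "Phi z = ((\<lambda>i. ((1/2) *\<^sub>R (fst (fst (z i)) + fst (snd (z i))),
                  (1/2) *\<^sub>R (snd (fst (z i)) + snd (snd (z i))))),
            (\<lambda>i. (snd (snd (z i)) - snd (fst (z i)),
                  fst (fst (z i)) - fst (snd (z i)))))"

text \<open>The subspace scrL: z'_i = z_{i+1} (indices mod n), written 0-based.\<close>
definition scrL :: "nat \<Rightarrow> (nat \<Rightarrow> 'd::finite V \<times> 'd V) set" where
  "scrL n = {z. (\<forall>i\<ge>n. z i = 0) \<and> (\<forall>i<n. snd (z i) = fst (z (Suc i mod n)))}"

text \<open>Graph of dF for F on V^n: (Q,P) with dF_Q(delta) = sum_i p_i.dq_i + p'_i.dq'_i
  for every tangent vector delta, the differential evaluated as the derivative
  of F along the line Q + t delta.\<close>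
definition graph_dF :: "nat \<Rightarrow> ((nat \<Rightarrow> 'd::finite V) \<Rightarrow> real)
    \<Rightarrow> ((nat \<Rightarrow> 'd V) \<times> (nat \<Rightarrow> 'd V)) set" where
  "graph_dF n F = {(Q,P). (Q,P) \<in> Tstar n \<and>
     (\<forall>\<delta>. (\<forall>i\<ge>n. \<delta> i = 0) \<longrightarrow>
        ((\<lambda>t. F (\<lambda>i. Q i + t *\<^sub>R \<delta> i)) has_real_derivative
           (\<Sum>i<n. fst (P i) \<bullet> fst (\<delta> i) + snd (P i) \<bullet> snd (\<delta> i))) (at 0))}"

text \<open>F(Q_1..Q_n) = 2 sum_{1<=i<j<=n} (-1)^{i+j-1} omega(Q_i,Q_j), written 0-based
  (1-based exponent i+j-1 becomes i+j+1).\<close>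
definition genF :: "nat \<Rightarrow> (nat \<Rightarrow> 'd::finite V) \<Rightarrow> real" where
  "genF n Q = 2 * (\<Sum>j<n. \<Sum>i<j. (-1) ^ (i + j + 1) * omega (Q i) (Q j))"

end

theory Submission
  imports Defs
begin

(* Phi carries the canonical form to the difference of the symplectic forms of the second and
   first factors, so on L, where the second components are the first ones rotated cyclically, it
   vanishes; testing against elements of L with a single nonzero first component and using
   nondegeneracy of omega shows that L is maximal.  The base point of Phi z is Q_i = (z_i + z_(i+1))/2.
   For odd n this cyclic system has the unique solution z_i = sum_j (-1)^j Q_(i+j), and the
   differential of the quadratic form F at Q, computed by telescoping alternating sums, is exactly the
   covector of Phi z.  For even n the alternating vector z_i = (-1)^i c lies in L above the base point
   0 with nonzero covector, as does 0 itself; but a graph of dF has only one covector above each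
   base point. *)

lemma sum_rotate: "(\<Sum>i<n. h (Suc i mod n)) = (\<Sum>i<n. h i)"
proof (cases n)
  case (Suc m)
  have "(\<Sum>i<Suc m. h (Suc i mod Suc m)) = (\<Sum>i<m. h (Suc i)) + h 0"
    by (simp add: sum.lessThan_Suc)
  also have "\<dots> = (\<Sum>i<Suc m. h i)"
    by (subst sum.lessThan_Suc_shift) (simp add: add.commute)
  finally show ?thesis using Suc by simp
qed simp

lemma Suc_mod_inj: "i < n \<Longrightarrow> k < n \<Longrightarrow> Suc i mod n = Suc k mod n \<longleftrightarrow> i = k"
  by (cases "Suc i = n"; cases "Suc k = n") auto

lemma sum_triangle_swap:
  "(\<Sum>j<n. \<Sum>i<j. f i j) = (\<Sum>i<n. \<Sum>j=Suc i..<n. f i j :: 'a::comm_monoid_add)"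
  by (induction n) (simp_all add: sum.distrib)

lemma alternating_sum_telescope:
  fixes b :: "nat \<Rightarrow> 'a::real_vector"
  assumes "m \<le> p"
  shows "(\<Sum>i=m..<p. (-1) ^ i *\<^sub>R (b i + b (Suc i))) = (-1) ^ m *\<^sub>R b m - (-1) ^ p *\<^sub>R b p"
  using sum_Suc_diff'[OF assms, of "\<lambda>i. - ((-1) ^ i *\<^sub>R b i)"] by (simp add: algebra_simps)

section \<open>The symplectic form and the identification Phi\<close>

definition symJ :: "'d::finite V \<Rightarrow> 'd V" where
  "symJ w = (snd w, - fst w)"

lemma omega_zero_right [simp]: "omega a 0 = 0"
  unfolding omega_def by simp

lemma omega_antisym: "omega z w = - omega w z"
  unfolding omega_def by (simp add: inner_commute)

lemma omega_diff_left: "omega (a - b) c = omega a c - omega b c"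
  unfolding omega_def by (simp add: inner_diff_left)

lemma omega_scaleR_left: "omega (r *\<^sub>R a) c = r * omega a c"
  unfolding omega_def by (simp add: algebra_simps)

lemma omega_sum_left: "omega (\<Sum>i\<in>A. f i) c = (\<Sum>i\<in>A. omega (f i) c)"
  unfolding omega_def by (simp add: fst_sum snd_sum inner_sum_left sum_subtractf)

lemma omega_line:
  "omega (a + t *\<^sub>R b) (c + t *\<^sub>R d) = omega a c + t * (omega a d + omega b c) + t\<^sup>2 * omega b d"
  unfolding omega_def by (simp add: inner_add_left inner_add_right algebra_simps power2_eq_square)

lemma omega_nondegenerate:
  assumes "\<And>c. omega z c = 0"
  shows "z = 0"
proof -
  have "fst z \<bullet> fst z + snd z \<bullet> snd z = 0"
    using assms[of "(- snd z, fst z)"] by (simp add: omega_def)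
  then show ?thesis
    by (simp add: prod_eq_iff add_nonneg_eq_0_iff)
qed

lemma Phi_fst: "fst (Phi z) i = (1/2) *\<^sub>R (fst (z i) + snd (z i))"
  unfolding Phi_def by (simp add: prod_eq_iff)

lemma Phi_snd: "snd (Phi z) i = symJ (snd (z i) - fst (z i))"
  unfolding Phi_def symJ_def by (simp add: prod_eq_iff)

lemma Phi_zero: "Phi (\<lambda>i. 0) = (\<lambda>i. 0, \<lambda>i. 0)"
  unfolding Phi_def by (simp add: zero_prod_def)

lemma Phi_add:
  "Phi (\<lambda>i. z i + w i) = (\<lambda>i. fst (Phi z) i + fst (Phi w) i, \<lambda>i. snd (Phi z) i + snd (Phi w) i)"
  unfolding Phi_def prod_eq_iff fun_eq_iff by (simp add: scaleR_add_right add_ac)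

lemma Phi_scaleR: "Phi (\<lambda>i. c *\<^sub>R z i) = (\<lambda>i. c *\<^sub>R fst (Phi z) i, \<lambda>i. c *\<^sub>R snd (Phi z) i)"
  unfolding Phi_def prod_eq_iff fun_eq_iff by (simp add: scaleR_add_right scaleR_diff_right)

lemma Phi_surj:
  assumes "(Q, P) \<in> Tstar n"
  shows "\<exists>z. (\<forall>i\<ge>n. z i = 0) \<and> Phi z = (Q, P)"
proof (intro exI conjI)
  define z where "z i = (Q i + (1/2) *\<^sub>R symJ (P i), Q i - (1/2) *\<^sub>R symJ (P i))" for i
  show "\<forall>i\<ge>n. z i = 0"
    using assms by (simp add: Tstar_def z_def symJ_def zero_prod_def)
  show "Phi z = (Q, P)"
    unfolding Phi_def z_def symJ_def by (simp add: prod_eq_iff fun_eq_iff scaleR_add_right[symmetric])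
qed

lemma can_form_Phi:
  "can_form n (Phi z) (Phi w) = (\<Sum>i<n. omega (snd (z i)) (snd (w i)) - omega (fst (z i)) (fst (w i)))"
  unfolding can_form_def
  by (intro sum.cong refl)
    (simp add: Phi_def omega_def inner_add_left inner_add_right inner_diff_left inner_diff_right
      inner_commute algebra_simps)

section \<open>L is Lagrangian\<close>

definition cyclic_pairs :: "nat \<Rightarrow> (nat \<Rightarrow> 'a::zero) \<Rightarrow> nat \<Rightarrow> 'a \<times> 'a" where
  "cyclic_pairs n e j = (if j < n then (e j, e (Suc j mod n)) else 0)"

lemma cyclic_pairs_in_scrL: "cyclic_pairs n e \<in> scrL n"
  unfolding scrL_def cyclic_pairs_def by auto

lemma scrL_zero: "(\<lambda>i. 0) \<in> scrL n"
  unfolding scrL_def by simp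

lemma zero_in_Phi_scrL: "(\<lambda>i. 0, \<lambda>i. 0) \<in> Phi ` scrL n"
  using imageI[OF scrL_zero, of Phi] by (simp only: Phi_zero)

lemma Tstar_Phi_scrL: "z \<in> scrL n \<Longrightarrow> Phi z \<in> Tstar n"
  unfolding scrL_def Tstar_def by (auto simp: Phi_def zero_prod_def)

lemma can_form_Phi_scrL:
  assumes "z \<in> scrL n" and "w \<in> scrL n"
  shows "can_form n (Phi z) (Phi w) = 0"
proof -
  have "can_form n (Phi z) (Phi w) =
      (\<Sum>i<n. omega (fst (z (Suc i mod n))) (fst (w (Suc i mod n)))) - (\<Sum>i<n. omega (fst (z i)) (fst (w i)))"
    using assms unfolding can_form_Phi sum_subtractf scrL_def by simp
  then show ?thesis
    using sum_rotate[of "\<lambda>i. omega (fst (z i)) (fst (w i))"] by simp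
qed

lemma scrL_if_orthogonal:
  assumes vanish: "\<forall>i\<ge>n. z i = 0"
    and orth: "\<And>w. w \<in> scrL n \<Longrightarrow> can_form n (Phi z) (Phi w) = 0"
  shows "z \<in> scrL n"
proof -
  have "snd (z k) = fst (z (Suc k mod n))" if k: "k < n" for k
  proof -
    define m where "m = Suc k mod n"
    have m: "m < n" using k by (simp add: m_def)
    have "omega (snd (z k) - fst (z m)) c = 0" for c
    proof -
      define e where "e j = (if j = m then c else 0)" for j
      have "(\<Sum>i<n. omega (snd (z i)) (e (Suc i mod n))) = (\<Sum>i<n. if i = k then omega (snd (z k)) c else 0)"
        by (rule sum.cong) (auto simp: e_def m_def k Suc_mod_inj)
      moreover have "(\<Sum>i<n. omega (fst (z i)) (e i)) = (\<Sum>i<n. if i = m then omega (fst (z m)) c else 0)"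
        by (rule sum.cong) (auto simp: e_def)
      moreover have "can_form n (Phi z) (Phi (cyclic_pairs n e)) = 0"
        by (rule orth[OF cyclic_pairs_in_scrL])
      ultimately show ?thesis
        using k m by (simp add: can_form_Phi cyclic_pairs_def sum_subtractf omega_diff_left)
    qed
    then show ?thesis
      using omega_nondegenerate[of "snd (z k) - fst (z m)"] by (simp add: m_def)
  qed
  with vanish show ?thesis unfolding scrL_def by blast
qed

lemma lagrangian_Phi_scrL: "lagrangian n (Phi ` (scrL n :: (nat \<Rightarrow> 'd::finite V \<times> 'd V) set))"
  unfolding lagrangian_def
proof (intro conjI ballI allI)
  show "Phi ` scrL n \<subseteq> Tstar n" using Tstar_Phi_scrL by blast
  show "(\<lambda>i. 0, \<lambda>i. 0) \<in> Phi ` scrL n" by (rule zero_in_Phi_scrL)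
next
  fix u v :: "(nat \<Rightarrow> 'd V) \<times> (nat \<Rightarrow> 'd V)"
  assume "u \<in> Phi ` scrL n" "v \<in> Phi ` scrL n"
  then obtain z w where z: "z \<in> scrL n" "u = Phi z" and w: "w \<in> scrL n" "v = Phi w" by blast
  have "(\<lambda>i. z i + w i) \<in> scrL n" using z w unfolding scrL_def by simp
  then have "Phi (\<lambda>i. z i + w i) \<in> Phi ` scrL n" by (rule imageI)
  then show "(\<lambda>i. fst u i + fst v i, \<lambda>i. snd u i + snd v i) \<in> Phi ` scrL n"
    unfolding z(2) w(2) Phi_add .
next
  fix c :: real and u :: "(nat \<Rightarrow> 'd V) \<times> (nat \<Rightarrow> 'd V)"
  assume "u \<in> Phi ` scrL n"
  then obtain z where z: "z \<in> scrL n" "u = Phi z" by blast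
  have "(\<lambda>i. c *\<^sub>R z i) \<in> scrL n" using z unfolding scrL_def by simp
  then have "Phi (\<lambda>i. c *\<^sub>R z i) \<in> Phi ` scrL n" by (rule imageI)
  then show "(\<lambda>i. c *\<^sub>R fst u i, \<lambda>i. c *\<^sub>R snd u i) \<in> Phi ` scrL n"
    unfolding z(2) Phi_scaleR .
next
  fix u :: "(nat \<Rightarrow> 'd V) \<times> (nat \<Rightarrow> 'd V)"
  assume u: "u \<in> Tstar n"
  show "(\<forall>v\<in>Phi ` scrL n. can_form n u v = 0) \<longleftrightarrow> u \<in> Phi ` scrL n"
  proof
    assume orth: "\<forall>v\<in>Phi ` scrL n. can_form n u v = 0"
    obtain z where vanish: "\<forall>i\<ge>n. z i = 0" and u_eq: "u = Phi z"
      using Phi_surj[of "fst u" "snd u"] u by auto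
    have "z \<in> scrL n"
      using vanish by (rule scrL_if_orthogonal) (use orth u_eq in blast)
    then show "u \<in> Phi ` scrL n" unfolding u_eq by (rule imageI)
  next
    assume "u \<in> Phi ` scrL n"
    then show "\<forall>v\<in>Phi ` scrL n. can_form n u v = 0" by (auto simp: can_form_Phi_scrL)
  qed
qed

section \<open>Graphs of differentials\<close>

lemma graph_dF_unique:
  assumes "(Q, P) \<in> graph_dF n F" and "(Q, P') \<in> graph_dF n F"
  shows "P = P'"
proof -
  have pairing: "(\<Sum>i<n. P i \<bullet> \<delta> i) = (\<Sum>i<n. P' i \<bullet> \<delta> i)" if "\<forall>i\<ge>n. \<delta> i = 0" for \<delta>
    using assms that unfolding graph_dF_def by (auto simp: inner_prod_def intro: DERIV_unique)
  have vanish: "\<forall>i\<ge>n. P i = 0 \<and> P' i = 0"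
    using assms by (simp add: graph_dF_def Tstar_def)
  then have "(\<Sum>i<n. (P i - P' i) \<bullet> (P i - P' i)) = 0"
    using pairing[of "\<lambda>i. P i - P' i"] by (simp add: inner_diff_left sum_subtractf)
  then have "\<forall>i<n. P i - P' i = 0"
    by (simp add: sum_nonneg_eq_0_iff)
  show ?thesis
  proof
    fix i show "P i = P' i"
      using vanish \<open>\<forall>i<n. P i - P' i = 0\<close> by (cases "i < n") auto
  qed
qed

lemma Phi_scrL_ne_graph_dF_even:
  fixes F :: "(nat \<Rightarrow> 'd::finite V) \<Rightarrow> real"
  assumes "even n" and "n \<ge> 1"
  shows "Phi ` (scrL n :: (nat \<Rightarrow> 'd V \<times> 'd V) set) \<noteq> graph_dF n F"
proof
  assume graph: "Phi ` scrL n = graph_dF n F"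
  define c :: "'d V" where "c = (1, 0)"
  define z where "z = cyclic_pairs n (\<lambda>i. (-1::real) ^ i *\<^sub>R c)"
  have base: "fst (Phi z) = (\<lambda>i. 0)"
    using \<open>even n\<close>
    by (simp add: fun_eq_iff Phi_fst z_def cyclic_pairs_def minus_one_power_iff dvd_mod_iff)
  have covector: "snd (Phi z) 0 \<noteq> 0"
    using assms
    by (auto simp: Phi_snd z_def cyclic_pairs_def c_def symJ_def zero_prod_def vec_eq_iff
        minus_one_power_iff dvd_mod_iff)
  have "Phi z = (\<lambda>i. 0, snd (Phi z))"
    using base by (simp add: prod_eq_iff)
  then have "(\<lambda>i. 0, snd (Phi z)) \<in> graph_dF n F"
    using graph cyclic_pairs_in_scrL unfolding z_def by (metis imageI)
  moreover have "(\<lambda>i. 0, \<lambda>i. 0) \<in> graph_dF n F"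
    using graph zero_in_Phi_scrL by blast
  ultimately have "snd (Phi z) = (\<lambda>i. 0)"
    by (rule graph_dF_unique)
  with covector show False by simp
qed

section \<open>The generating function for odd n\<close>

definition genF_polar :: "nat \<Rightarrow> (nat \<Rightarrow> 'd::finite V) \<Rightarrow> (nat \<Rightarrow> 'd V) \<Rightarrow> real" where
  "genF_polar n Q \<delta> =
     2 * (\<Sum>j<n. \<Sum>i<j. (-1) ^ (i + j + 1) * (omega (Q i) (\<delta> j) + omega (\<delta> i) (Q j)))"

lemma genF_line:
  "genF n (\<lambda>i. Q i + t *\<^sub>R \<delta> i) = genF n Q + t * genF_polar n Q \<delta> + t\<^sup>2 * genF n \<delta>"
  unfolding genF_def genF_polar_def omega_line distrib_left sum.distrib sum_distrib_left
  by (simp add: ac_simps)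

lemma DERIV_genF_line:
  "((\<lambda>t. genF n (\<lambda>i. Q i + t *\<^sub>R \<delta> i)) has_real_derivative genF_polar n Q \<delta>) (at 0)"
proof -
  have "((\<lambda>t. genF n Q + t * genF_polar n Q \<delta> + t\<^sup>2 * genF n \<delta>) has_real_derivative genF_polar n Q \<delta>) (at 0)"
    by (auto intro!: derivative_eq_intros)
  then show ?thesis unfolding genF_line .
qed

definition sgrad :: "nat \<Rightarrow> (nat \<Rightarrow> 'd::finite V) \<Rightarrow> nat \<Rightarrow> 'd V" where
  "sgrad n Q k = (\<Sum>i<k. (2 * (-1) ^ (i + k + 1)) *\<^sub>R Q i)
     - (\<Sum>i=Suc k..<n. (2 * (-1) ^ (i + k + 1)) *\<^sub>R Q i)"

lemma genF_polar_eq_sgrad: "genF_polar n Q \<delta> = (\<Sum>k<n. omega (sgrad n Q k) (\<delta> k))"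
proof -
  let ?a = "\<lambda>i j. 2 * (-1::real) ^ (i + j + 1)"
  have "genF_polar n Q \<delta> =
      (\<Sum>j<n. \<Sum>i<j. ?a i j * omega (Q i) (\<delta> j)) + (\<Sum>j<n. \<Sum>i<j. ?a i j * omega (\<delta> i) (Q j))"
    unfolding genF_polar_def distrib_left sum.distrib sum_distrib_left by (simp add: mult.assoc)
  also have "(\<Sum>j<n. \<Sum>i<j. ?a i j * omega (Q i) (\<delta> j)) = (\<Sum>k<n. omega (\<Sum>i<k. ?a i k *\<^sub>R Q i) (\<delta> k))"
    by (simp only: omega_sum_left omega_scaleR_left)
  also have "(\<Sum>j<n. \<Sum>i<j. ?a i j * omega (\<delta> i) (Q j)) = (\<Sum>k<n. \<Sum>i=Suc k..<n. ?a k i * omega (\<delta> k) (Q i))"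
    by (rule sum_triangle_swap)
  also have "\<dots> = (\<Sum>k<n. \<Sum>i=Suc k..<n. - (?a i k * omega (Q i) (\<delta> k)))"
    by (simp add: omega_antisym[of "\<delta> _"] ac_simps)
  also have "\<dots> = - (\<Sum>k<n. omega (\<Sum>i=Suc k..<n. ?a i k *\<^sub>R Q i) (\<delta> k))"
    by (simp only: omega_sum_left omega_scaleR_left sum_negf)
  finally show ?thesis
    by (simp add: sgrad_def omega_diff_left sum_subtractf)
qed

lemma sgrad_Phi_scrL:
  assumes z: "z \<in> scrL n" and "odd n" and k: "k < n"
  shows "sgrad n (fst (Phi z)) k = fst (z k) - snd (z k)"
proof -
  define b where "b i = fst (z (i mod n))" for i
  define g where "g i = (-1::real) ^ i *\<^sub>R (b i + b (Suc i))" for i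
  have b_less: "b i = fst (z i)" and b_Suc: "b (Suc i) = snd (z i)" if "i < n" for i
    using z that by (simp_all add: scrL_def b_def)
  have coeff: "(2 * (-1) ^ (i + k + 1)) *\<^sub>R fst (Phi z) i = (-1) ^ (k + 1) *\<^sub>R g i" if "i < n" for i
    using that by (simp add: Phi_fst g_def b_less b_Suc power_add mult.commute)
  have "sgrad n (fst (Phi z)) k =
      (\<Sum>i<k. (-1) ^ (k + 1) *\<^sub>R g i) - (\<Sum>i=Suc k..<n. (-1) ^ (k + 1) *\<^sub>R g i)"
    unfolding sgrad_def using k by (intro arg_cong2[where f = minus] sum.cong refl coeff) auto
  also have "\<dots> = (-1) ^ (k + 1) *\<^sub>R ((\<Sum>i<k. g i) - (\<Sum>i=Suc k..<n. g i))"
    by (simp only: scaleR_sum_right scaleR_diff_right)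
  also have "(\<Sum>i<k. g i) = b 0 - (-1) ^ k *\<^sub>R b k"
    using alternating_sum_telescope[of 0 k b] by (simp add: g_def lessThan_atLeast0)
  also have "(\<Sum>i=Suc k..<n. g i) = (-1) ^ Suc k *\<^sub>R b (Suc k) + b 0"
    using alternating_sum_telescope[of "Suc k" n b] k \<open>odd n\<close> by (simp add: g_def b_def)
  also have "(-1::real) ^ (k + 1) *\<^sub>R (b 0 - (-1) ^ k *\<^sub>R b k - ((-1) ^ Suc k *\<^sub>R b (Suc k) + b 0))
      = b k - b (Suc k)"
    by (simp add: algebra_simps)
  finally show ?thesis
    using k by (simp add: b_less b_Suc)
qed

lemma Phi_scrL_subset_graph_dF_odd:
  assumes "odd n"
  shows "Phi ` scrL n \<subseteq> graph_dF n (genF n)"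
proof (rule image_subsetI)
  fix z assume z: "z \<in> scrL n"
  have "(\<Sum>k<n. omega (sgrad n (fst (Phi z)) k) (\<delta> k)) =
      (\<Sum>k<n. fst (snd (Phi z) k) \<bullet> fst (\<delta> k) + snd (snd (Phi z) k) \<bullet> snd (\<delta> k))" for \<delta>
    using sgrad_Phi_scrL[OF z assms]
    by (intro sum.cong) (simp_all add: Phi_snd symJ_def omega_def inner_diff_left inner_diff_right inner_commute)
  then show "Phi z \<in> graph_dF n (genF n)"
    using Tstar_Phi_scrL[OF z] DERIV_genF_line[of n "fst (Phi z)"]
    by (simp add: graph_dF_def case_prod_unfold genF_polar_eq_sgrad)
qed

lemma exists_scrL_base_odd:
  assumes "odd n" and vanish: "\<forall>i\<ge>n. Q i = 0"
  shows "\<exists>z\<in>scrL n. fst (Phi z) = Q"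
proof
  define b where "b i = (\<Sum>j<n. (-1::real) ^ j *\<^sub>R Q ((i + j) mod n))" for i
  have b_cyclic: "b i + b (Suc i mod n) = 2 *\<^sub>R Q i" if "i < n" for i
  proof -
    define f where "f j = Q ((i + j) mod n)" for j
    have "b (Suc i mod n) = (\<Sum>j<n. (-1::real) ^ j *\<^sub>R f (Suc j))"
      by (simp add: b_def f_def mod_add_left_eq)
    then have "b i + b (Suc i mod n) = (\<Sum>j=0..<n. (-1::real) ^ j *\<^sub>R (f j + f (Suc j)))"
      by (simp add: b_def f_def sum.distrib scaleR_add_right lessThan_atLeast0)
    also have "\<dots> = f 0 - (-1::real) ^ n *\<^sub>R f n"
      by (simp add: alternating_sum_telescope)
    also have "\<dots> = 2 *\<^sub>R Q i"
      using \<open>odd n\<close> that by (simp add: f_def scaleR_2)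
    finally show ?thesis .
  qed
  show "cyclic_pairs n b \<in> scrL n" by (rule cyclic_pairs_in_scrL)
  show "fst (Phi (cyclic_pairs n b)) = Q"
  proof
    fix i show "fst (Phi (cyclic_pairs n b)) i = Q i"
      using b_cyclic[of i] vanish by (cases "i < n") (simp_all add: Phi_fst cyclic_pairs_def)
  qed
qed

lemma Phi_scrL_eq_graph_dF_odd:
  assumes "odd n"
  shows "Phi ` scrL n = graph_dF n (genF n)"
proof
  show "Phi ` scrL n \<subseteq> graph_dF n (genF n)"
    using assms by (rule Phi_scrL_subset_graph_dF_odd)
  show "graph_dF n (genF n) \<subseteq> Phi ` scrL n"
  proof clarify
    fix Q P assume QP: "(Q, P) \<in> graph_dF n (genF n)"
    then have "\<forall>i\<ge>n. Q i = 0" by (simp add: graph_dF_def Tstar_def)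
    then obtain z where z: "z \<in> scrL n" and base: "fst (Phi z) = Q"
      using exists_scrL_base_odd[OF assms] by blast
    have Phi_z: "Phi z = (Q, snd (Phi z))"
      using base by (simp add: prod_eq_iff)
    then have "(Q, snd (Phi z)) \<in> graph_dF n (genF n)"
      using Phi_scrL_subset_graph_dF_odd[OF assms] z by (metis image_subset_iff)
    with QP have "P = snd (Phi z)"
      by (rule graph_dF_unique)
    with Phi_z z show "(Q, P) \<in> Phi ` scrL n"
      by (metis imageI)
  qed
qed

theorem mainTheorem11:
  fixes n :: nat
  assumes "n \<ge> 1"
  shows "lagrangian n (Phi ` (scrL n :: (nat \<Rightarrow> 'd::finite V \<times> 'd V) set))
     \<and> (odd n \<longrightarrow> Phi ` (scrL n :: (nat \<Rightarrow> 'd V \<times> 'd V) set) = graph_dF n (genF n))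
     \<and> (even n \<longrightarrow> \<not> (\<exists>F :: (nat \<Rightarrow> 'd V) \<Rightarrow> real.
            Phi ` (scrL n :: (nat \<Rightarrow> 'd V \<times> 'd V) set) = graph_dF n F))"
  using lagrangian_Phi_scrL Phi_scrL_eq_graph_dF_odd Phi_scrL_ne_graph_dF_even[OF _ assms]
  by blast

end
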